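(* Let $G$ be a finite group and $M$ a finitely generated (hence finite) $\mathbb{B}[G]$-module. Then $M$ is isomorphic (as a $\mathbb{B}[G]$-module) to a submodule of $\mathbb{B}[G]^n$ for some $n$.
   Context: $\mathbb{B}=\{0,1\}$ is the Boolean semifield with $1+1=1$ and $\mathbb{B}[G]$ is the group semiring. *)

theory Defs
  imports "HOL-Algebra.Group"
begin

text \<open>The group semiring B[G] of a finite group G over the Boolean semifield B:
  an element sum_g a_g g with a_g in B is identified with its support, a subset of carrier G.
  Addition is union (1+1=1), zero is the empty set, one is the singleton of the unit,
  multiplication is the set product.\<close>

definition bg_mult :: "('g, 'b) monoid_scheme \<Rightarrow> 'g set \<Rightarrow> 'g set \<Rightarrow> 'g set" where
  "bg_mult G A B = {a \<otimes>\<^bsub>G\<^esub> b | a b. a \<in> A \<and> b \<in> B}"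

definition bg_elems :: "('g, 'b) monoid_scheme \<Rightarrow> 'g set set" where
  "bg_elems G = Pow (carrier G)"

definition bg_module ::
  "('g, 'b) monoid_scheme \<Rightarrow> 'm set \<Rightarrow> ('m \<Rightarrow> 'm \<Rightarrow> 'm) \<Rightarrow> 'm \<Rightarrow> ('g set \<Rightarrow> 'm \<Rightarrow> 'm) \<Rightarrow> bool" where
  "bg_module G M add zero smul \<longleftrightarrow>
     zero \<in> M \<and>
     (\<forall>x\<in>M. \<forall>y\<in>M. add x y \<in> M) \<and>
     (\<forall>A\<in>bg_elems G. \<forall>x\<in>M. smul A x \<in> M) \<and>
     (\<forall>x\<in>M. \<forall>y\<in>M. \<forall>z\<in>M. add (add x y) z = add x (add y z)) \<and>
     (\<forall>x\<in>M. \<forall>y\<in>M. add x y = add y x) \<and>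
     (\<forall>x\<in>M. add zero x = x) \<and>
     (\<forall>A\<in>bg_elems G. \<forall>x\<in>M. \<forall>y\<in>M. smul A (add x y) = add (smul A x) (smul A y)) \<and>
     (\<forall>A\<in>bg_elems G. \<forall>B\<in>bg_elems G. \<forall>x\<in>M. smul (A \<union> B) x = add (smul A x) (smul B x)) \<and>
     (\<forall>A\<in>bg_elems G. \<forall>B\<in>bg_elems G. \<forall>x\<in>M. smul (bg_mult G A B) x = smul A (smul B x)) \<and>
     (\<forall>x\<in>M. smul {\<one>\<^bsub>G\<^esub>} x = x) \<and>
     (\<forall>x\<in>M. smul {} x = zero) \<and>
     (\<forall>A\<in>bg_elems G. smul A zero = zero)"

definition bg_submodule ::
  "('g, 'b) monoid_scheme \<Rightarrow> 'm set \<Rightarrow> 'm set \<Rightarrow> ('m \<Rightarrow> 'm \<Rightarrow> 'm) \<Rightarrow> 'm \<Rightarrow> ('g set \<Rightarrow> 'm \<Rightarrow> 'm) \<Rightarrow> bool" where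
  "bg_submodule G N M add zero smul \<longleftrightarrow>
     N \<subseteq> M \<and> zero \<in> N \<and>
     (\<forall>x\<in>N. \<forall>y\<in>N. add x y \<in> N) \<and>
     (\<forall>A\<in>bg_elems G. \<forall>x\<in>N. smul A x \<in> N)"

definition bg_fin_gen ::
  "('g, 'b) monoid_scheme \<Rightarrow> 'm set \<Rightarrow> ('m \<Rightarrow> 'm \<Rightarrow> 'm) \<Rightarrow> 'm \<Rightarrow> ('g set \<Rightarrow> 'm \<Rightarrow> 'm) \<Rightarrow> bool" where
  "bg_fin_gen G M add zero smul \<longleftrightarrow>
     (\<exists>S. finite S \<and> S \<subseteq> M \<and>
        (\<forall>N. bg_submodule G N M add zero smul \<and> S \<subseteq> N \<longrightarrow> N = M))"

text \<open>The free module B[G]^n: tuples indexed by {0..<n}, encoded extensionally as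
  functions nat => 'g set that are empty outside {0..<n}; operations componentwise.\<close>

definition bg_free :: "('g, 'b) monoid_scheme \<Rightarrow> nat \<Rightarrow> (nat \<Rightarrow> 'g set) set" where
  "bg_free G n = {v. (\<forall>i<n. v i \<in> bg_elems G) \<and> (\<forall>i\<ge>n. v i = {})}"

definition bg_free_add :: "(nat \<Rightarrow> 'g set) \<Rightarrow> (nat \<Rightarrow> 'g set) \<Rightarrow> (nat \<Rightarrow> 'g set)" where
  "bg_free_add v w = (\<lambda>i. v i \<union> w i)"

definition bg_free_zero :: "nat \<Rightarrow> 'g set" where
  "bg_free_zero = (\<lambda>i. {})"

definition bg_free_smul :: "('g, 'b) monoid_scheme \<Rightarrow> 'g set \<Rightarrow> (nat \<Rightarrow> 'g set) \<Rightarrow> (nat \<Rightarrow> 'g set)" where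
  "bg_free_smul G A v = (\<lambda>i. bg_mult G A (v i))"

definition bg_module_hom ::
  "('g, 'b) monoid_scheme \<Rightarrow> ('m \<Rightarrow> 'n) \<Rightarrow>
   'm set \<Rightarrow> ('m \<Rightarrow> 'm \<Rightarrow> 'm) \<Rightarrow> 'm \<Rightarrow> ('g set \<Rightarrow> 'm \<Rightarrow> 'm) \<Rightarrow>
   'n set \<Rightarrow> ('n \<Rightarrow> 'n \<Rightarrow> 'n) \<Rightarrow> 'n \<Rightarrow> ('g set \<Rightarrow> 'n \<Rightarrow> 'n) \<Rightarrow> bool" where
  "bg_module_hom G f M add zero smul M' add' zero' smul' \<longleftrightarrow>
     (\<forall>x\<in>M. f x \<in> M') \<and>
     (\<forall>x\<in>M. \<forall>y\<in>M. f (add x y) = add' (f x) (f y)) \<and>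
     f zero = zero' \<and>
     (\<forall>A\<in>bg_elems G. \<forall>x\<in>M. f (smul A x) = smul' A (f x))"

end

theory Submission
  imports Defs
begin

text \<open>Since 1 + 1 = 1 in \<open>\<bool>\<close>, addition in a \<open>\<bool>[G]\<close>-module M is idempotent: M is a join
  semilattice (\<open>x \<preceq> y \<longleftrightarrow> x + y = y\<close>) on which G acts by order automorphisms, and \<open>A \<cdot> x\<close> is
  the join of the translates \<open>a \<cdot> x\<close>, \<open>a \<in> A\<close>. Hence for each \<open>m \<in> M\<close> the map
  \<open>x \<mapsto> {g. \<not> x \<preceq> g \<cdot> m}\<close> is a module homomorphism \<open>M \<rightarrow> \<bool>[G]\<close>; its value contains 1 iff
  \<open>\<not> x \<preceq> m\<close>, so these maps together separate the points of M. If M is generated by a finite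
  set S, every element is the join of the elements of the finite orbit \<open>G \<cdot> S\<close> below it, so M is
  finite and the maps for all \<open>m \<in> M\<close> embed M into \<open>\<bool>[G]\<^bsup>|M|\<^esup>\<close>.\<close>

locale bg_semimodule = group G for G :: "('g, 'b) monoid_scheme" (structure) +
  fixes M :: "'m set" and add :: "'m \<Rightarrow> 'm \<Rightarrow> 'm" and zero :: 'm
    and smul :: "'g set \<Rightarrow> 'm \<Rightarrow> 'm"
  assumes module: "bg_module G M add zero smul"
begin

lemma zero_closed: "zero \<in> M"
  using module unfolding bg_module_def by auto

lemma add_closed: "x \<in> M \<Longrightarrow> y \<in> M \<Longrightarrow> add x y \<in> M"
  using module unfolding bg_module_def by auto

lemma smul_closed: "A \<subseteq> carrier G \<Longrightarrow> x \<in> M \<Longrightarrow> smul A x \<in> M"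
  using module unfolding bg_module_def bg_elems_def by auto

lemma add_assoc: "x \<in> M \<Longrightarrow> y \<in> M \<Longrightarrow> z \<in> M \<Longrightarrow> add (add x y) z = add x (add y z)"
  using module unfolding bg_module_def by auto

lemma add_commute: "x \<in> M \<Longrightarrow> y \<in> M \<Longrightarrow> add x y = add y x"
  using module unfolding bg_module_def by auto

lemma add_zero_left: "x \<in> M \<Longrightarrow> add zero x = x"
  using module unfolding bg_module_def by auto

lemma smul_add:
  "A \<subseteq> carrier G \<Longrightarrow> x \<in> M \<Longrightarrow> y \<in> M \<Longrightarrow> smul A (add x y) = add (smul A x) (smul A y)"
  using module unfolding bg_module_def bg_elems_def by auto

lemma smul_Un:
  "A \<subseteq> carrier G \<Longrightarrow> B \<subseteq> carrier G \<Longrightarrow> x \<in> M \<Longrightarrow> smul (A \<union> B) x = add (smul A x) (smul B x)"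
  using module unfolding bg_module_def bg_elems_def by auto

lemma smul_bg_mult:
  "A \<subseteq> carrier G \<Longrightarrow> B \<subseteq> carrier G \<Longrightarrow> x \<in> M \<Longrightarrow> smul (bg_mult G A B) x = smul A (smul B x)"
  using module unfolding bg_module_def bg_elems_def by auto

lemma smul_one: "x \<in> M \<Longrightarrow> smul {\<one>} x = x"
  using module unfolding bg_module_def by auto

lemma smul_empty: "x \<in> M \<Longrightarrow> smul {} x = zero"
  using module unfolding bg_module_def by auto

lemma add_idem: "x \<in> M \<Longrightarrow> add x x = x"
  using smul_Un[of "{\<one>}" "{\<one>}" x] smul_one by simp

lemma smul_singleton_smul_singleton:
  "a \<in> carrier G \<Longrightarrow> b \<in> carrier G \<Longrightarrow> x \<in> M \<Longrightarrow> smul {a} (smul {b} x) = smul {a \<otimes> b} x"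
  using smul_bg_mult[of "{a}" "{b}" x] by (simp add: bg_mult_def)

subsection \<open>The semilattice order\<close>

definition le :: "'m \<Rightarrow> 'm \<Rightarrow> bool" (infix "\<preceq>" 50)
  where "x \<preceq> y \<longleftrightarrow> add x y = y"

lemma le_refl: "x \<in> M \<Longrightarrow> x \<preceq> x"
  using add_idem le_def by simp

lemma zero_le: "x \<in> M \<Longrightarrow> zero \<preceq> x"
  using add_zero_left le_def by simp

lemma le_antisym: "x \<in> M \<Longrightarrow> y \<in> M \<Longrightarrow> x \<preceq> y \<Longrightarrow> y \<preceq> x \<Longrightarrow> x = y"
  unfolding le_def by (metis add_commute)

lemma le_trans: "x \<in> M \<Longrightarrow> y \<in> M \<Longrightarrow> z \<in> M \<Longrightarrow> x \<preceq> y \<Longrightarrow> y \<preceq> z \<Longrightarrow> x \<preceq> z"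
  unfolding le_def by (metis add_assoc)

lemma le_add_left: "x \<in> M \<Longrightarrow> y \<in> M \<Longrightarrow> x \<preceq> add x y"
  unfolding le_def by (simp add: add_assoc[symmetric] add_idem)

lemma le_add_right: "x \<in> M \<Longrightarrow> y \<in> M \<Longrightarrow> y \<preceq> add x y"
  using le_add_left add_commute by metis

lemma add_le_iff:
  assumes x: "x \<in> M" and y: "y \<in> M" and u: "u \<in> M"
  shows "add x y \<preceq> u \<longleftrightarrow> x \<preceq> u \<and> y \<preceq> u"
proof
  assume "add x y \<preceq> u"
  then show "x \<preceq> u \<and> y \<preceq> u"
    using le_trans[OF _ add_closed[OF x y] u] le_add_left[OF x y] le_add_right[OF x y] x y
    by simp
next
  assume "x \<preceq> u \<and> y \<preceq> u"
  then show "add x y \<preceq> u"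
    using x y u by (simp add: le_def add_assoc)
qed

lemma smul_singleton_mono:
  "a \<in> carrier G \<Longrightarrow> x \<in> M \<Longrightarrow> y \<in> M \<Longrightarrow> x \<preceq> y \<Longrightarrow> smul {a} x \<preceq> smul {a} y"
  unfolding le_def using smul_add[of "{a}" x y] by simp

lemma smul_singleton_le_iff:
  assumes a: "a \<in> carrier G" and x: "x \<in> M" and u: "u \<in> M"
  shows "smul {a} x \<preceq> u \<longleftrightarrow> x \<preceq> smul {inv a} u"
proof
  assume "smul {a} x \<preceq> u"
  then have "smul {inv a} (smul {a} x) \<preceq> smul {inv a} u"
    using a x u smul_closed smul_singleton_mono by simp
  then show "x \<preceq> smul {inv a} u"
    using a x smul_singleton_smul_singleton smul_one by simp
next
  assume "x \<preceq> smul {inv a} u"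
  then have "smul {a} x \<preceq> smul {a} (smul {inv a} u)"
    using a x u smul_closed smul_singleton_mono by simp
  then show "smul {a} x \<preceq> u"
    using a u smul_singleton_smul_singleton smul_one by simp
qed

lemma smul_le_iff:
  assumes "finite A" "A \<subseteq> carrier G" and x: "x \<in> M" and u: "u \<in> M"
  shows "smul A x \<preceq> u \<longleftrightarrow> (\<forall>a\<in>A. smul {a} x \<preceq> u)"
  using assms(1,2)
proof (induction A rule: finite_induct)
  case empty
  then show ?case using smul_empty zero_le x u by simp
next
  case (insert a A)
  then have "smul (insert a A) x = add (smul {a} x) (smul A x)"
    using smul_Un[of "{a}" A x] x by simp
  then show ?case
    using insert x u add_le_iff smul_closed by simp
qed

lemma hom_image_submodule:
  assumes hom: "bg_module_hom G f M add zero smul (f ` M) add' zero' smul'"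
    and "f ` M \<subseteq> T"
  shows "bg_submodule G (f ` M) T add' zero' smul'"
  unfolding bg_submodule_def
proof (intro conjI ballI)
  show "f ` M \<subseteq> T" by fact
  show "zero' \<in> f ` M"
    using hom zero_closed unfolding bg_module_hom_def by force
next
  fix u v assume "u \<in> f ` M" "v \<in> f ` M"
  then obtain x y where "x \<in> M" "y \<in> M" "u = f x" "v = f y" by blast
  then show "add' u v \<in> f ` M"
    using hom add_closed unfolding bg_module_hom_def by (metis image_eqI)
next
  fix A u assume "A \<in> bg_elems G" "u \<in> f ` M"
  moreover obtain x where "x \<in> M" "u = f x" using \<open>u \<in> f ` M\<close> by blast
  ultimately show "smul' A u \<in> f ` M"
    using hom smul_closed unfolding bg_module_hom_def bg_elems_def by (metis PowD image_eqI)
qed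

end

subsection \<open>Finitely generated modules are finite\<close>

locale finite_bg_semimodule = bg_semimodule G M add zero smul
  for G :: "('g, 'b) monoid_scheme" (structure) and M :: "'m set" and add zero smul +
  assumes finite_carrier: "finite (carrier G)"
begin

lemma bg_submoduleI:
  assumes NM: "N \<subseteq> M" and zero: "zero \<in> N"
    and add: "\<And>x y. x \<in> N \<Longrightarrow> y \<in> N \<Longrightarrow> add x y \<in> N"
    and translate: "\<And>a x. a \<in> carrier G \<Longrightarrow> x \<in> N \<Longrightarrow> smul {a} x \<in> N"
  shows "bg_submodule G N M add zero smul"
proof -
  have smul: "smul A x \<in> N" if "A \<subseteq> carrier G" and x: "x \<in> N" for A x
  proof -
    have "finite A" using that finite_carrier finite_subset by blast
    then show ?thesis using \<open>A \<subseteq> carrier G\<close>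
    proof (induction A rule: finite_induct)
      case empty
      show ?case using smul_empty x NM zero by auto
    next
      case (insert a A)
      then have "smul (insert a A) x = add (smul {a} x) (smul A x)"
        using smul_Un[of "{a}" A x] x NM by auto
      then show ?case
        using insert add translate x by simp
    qed
  qed
  show ?thesis
    unfolding bg_submodule_def bg_elems_def by (simp add: NM zero add smul)
qed

definition joins_of :: "'m set \<Rightarrow> 'm set"
  where "joins_of P = {x \<in> M. \<forall>u\<in>M. (\<forall>p\<in>P. p \<preceq> x \<longrightarrow> p \<preceq> u) \<longrightarrow> x \<preceq> u}"

lemma joins_ofI:
  "x \<in> M \<Longrightarrow> (\<And>u. u \<in> M \<Longrightarrow> (\<And>p. p \<in> P \<Longrightarrow> p \<preceq> x \<Longrightarrow> p \<preceq> u) \<Longrightarrow> x \<preceq> u)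
    \<Longrightarrow> x \<in> joins_of P"
  unfolding joins_of_def by blast

lemma joins_ofD:
  "x \<in> joins_of P \<Longrightarrow> u \<in> M \<Longrightarrow> (\<And>p. p \<in> P \<Longrightarrow> p \<preceq> x \<Longrightarrow> p \<preceq> u) \<Longrightarrow> x \<preceq> u"
  unfolding joins_of_def by blast

lemma joins_of_subset: "joins_of P \<subseteq> M"
  unfolding joins_of_def by blast

lemma joins_of_submodule:
  assumes PM: "P \<subseteq> M" and P_translate: "\<And>a p. a \<in> carrier G \<Longrightarrow> p \<in> P \<Longrightarrow> smul {a} p \<in> P"
  shows "bg_submodule G (joins_of P) M add zero smul"
proof (rule bg_submoduleI)
  show "joins_of P \<subseteq> M" by (fact joins_of_subset)
  show "zero \<in> joins_of P" using zero_closed zero_le by (blast intro: joins_ofI)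
next
  fix x y assume x: "x \<in> joins_of P" and y: "y \<in> joins_of P"
  then have xM: "x \<in> M" and yM: "y \<in> M" using joins_of_subset by auto
  have xyM: "add x y \<in> M" using xM yM add_closed by simp
  show "add x y \<in> joins_of P"
  proof (rule joins_ofI[OF xyM])
    fix u assume u: "u \<in> M" and bound: "\<And>p. p \<in> P \<Longrightarrow> p \<preceq> add x y \<Longrightarrow> p \<preceq> u"
    have "x \<preceq> u"
    proof (rule joins_ofD[OF x u])
      fix p assume "p \<in> P" "p \<preceq> x"
      then show "p \<preceq> u" using bound le_trans[OF _ xM xyM _ le_add_left[OF xM yM]] PM by blast
    qed
    moreover have "y \<preceq> u"
    proof (rule joins_ofD[OF y u])
      fix p assume "p \<in> P" "p \<preceq> y"
      then show "p \<preceq> u" using bound le_trans[OF _ yM xyM _ le_add_right[OF xM yM]] PM by blast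
    qed
    ultimately show "add x y \<preceq> u" using add_le_iff xM yM u by simp
  qed
next
  fix a x assume a: "a \<in> carrier G" and x: "x \<in> joins_of P"
  then have xM: "x \<in> M" using joins_of_subset by auto
  show "smul {a} x \<in> joins_of P"
  proof (rule joins_ofI)
    show "smul {a} x \<in> M" using a xM smul_closed by simp
    fix u assume u: "u \<in> M" and bound: "\<And>p. p \<in> P \<Longrightarrow> p \<preceq> smul {a} x \<Longrightarrow> p \<preceq> u"
    have "x \<preceq> smul {inv a} u"
    proof (rule joins_ofD[OF x])
      show "smul {inv a} u \<in> M" using a u smul_closed by simp
      fix p assume p: "p \<in> P" "p \<preceq> x"
      then have "smul {a} p \<preceq> smul {a} x"
        using smul_singleton_mono a xM PM by blast
      then have "smul {a} p \<preceq> u"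
        using bound P_translate a p by blast
      then show "p \<preceq> smul {inv a} u"
        using smul_singleton_le_iff a p PM u by blast
    qed
    then show "smul {a} x \<preceq> u" using smul_singleton_le_iff a xM u by simp
  qed
qed

lemma inj_on_lower_set_joins_of: "inj_on (\<lambda>x. {p \<in> P. p \<preceq> x}) (joins_of P)"
proof (rule inj_onI)
  fix x y assume x: "x \<in> joins_of P" and y: "y \<in> joins_of P"
    and eq: "{p \<in> P. p \<preceq> x} = {p \<in> P. p \<preceq> y}"
  have xM: "x \<in> M" and yM: "y \<in> M" using x y joins_of_subset by auto
  have "x \<preceq> y" using joins_ofD[OF x yM] eq by blast
  moreover have "y \<preceq> x" using joins_ofD[OF y xM] eq by blast
  ultimately show "x = y" using le_antisym xM yM by simp
qed

lemma bg_fin_gen_imp_finite: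
  assumes "bg_fin_gen G M add zero smul"
  shows "finite M"
proof -
  obtain S where S: "finite S" "S \<subseteq> M"
    and generates: "\<forall>N. bg_submodule G N M add zero smul \<and> S \<subseteq> N \<longrightarrow> N = M"
    using assms unfolding bg_fin_gen_def by blast
  define P where "P = (\<lambda>(a, s). smul {a} s) ` (carrier G \<times> S)"
  have "finite P" unfolding P_def using S finite_carrier by simp
  have PM: "P \<subseteq> M" unfolding P_def using S smul_closed by auto
  have P_iff: "p \<in> P \<longleftrightarrow> (\<exists>a\<in>carrier G. \<exists>s\<in>S. p = smul {a} s)" for p
    unfolding P_def by auto
  have P_translate: "smul {a} p \<in> P" if a: "a \<in> carrier G" and "p \<in> P" for a p
  proof -
    obtain b s where b: "b \<in> carrier G" and s: "s \<in> S" and p: "p = smul {b} s"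
      using \<open>p \<in> P\<close> P_iff by auto
    have "smul {a} p = smul {a \<otimes> b} s"
      using smul_singleton_smul_singleton a b s S p by (simp add: subset_iff)
    then show ?thesis using P_iff a b s by auto
  qed
  have "S \<subseteq> P"
    using P_iff smul_one S one_closed by (metis subsetI subset_iff)
  then have "S \<subseteq> joins_of P"
    using S le_refl by (blast intro: joins_ofI)
  then have joins: "joins_of P = M"
    using generates joins_of_submodule[OF PM P_translate] by simp
  have "(\<lambda>x. {p \<in> P. p \<preceq> x}) ` joins_of P \<subseteq> Pow P" by blast
  then have "finite ((\<lambda>x. {p \<in> P. p \<preceq> x}) ` joins_of P)"
    using \<open>finite P\<close> finite_subset by blast
  then show ?thesis
    using finite_imageD inj_on_lower_set_joins_of joins by metis
qed

subsection \<open>Embedding into a free module\<close>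

definition nonbounding :: "'m \<Rightarrow> 'm \<Rightarrow> 'g set"
  where "nonbounding m x = {g \<in> carrier G. \<not> x \<preceq> smul {g} m}"

lemma nonbounding_add:
  "m \<in> M \<Longrightarrow> x \<in> M \<Longrightarrow> y \<in> M \<Longrightarrow> nonbounding m (add x y) = nonbounding m x \<union> nonbounding m y"
  unfolding nonbounding_def using add_le_iff smul_closed by auto

lemma nonbounding_zero: "m \<in> M \<Longrightarrow> nonbounding m zero = {}"
  unfolding nonbounding_def using zero_le smul_closed by auto

lemma nonbounding_smul_singleton:
  assumes m: "m \<in> M" and a: "a \<in> carrier G" and x: "x \<in> M"
  shows "nonbounding m (smul {a} x) = (\<lambda>h. a \<otimes> h) ` nonbounding m x"
proof -
  have shift: "g \<in> nonbounding m (smul {a} x) \<longleftrightarrow> inv a \<otimes> g \<in> nonbounding m x"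
    if "g \<in> carrier G" for g
    using that a x m smul_singleton_le_iff smul_closed smul_singleton_smul_singleton
    unfolding nonbounding_def by simp
  show ?thesis
  proof (intro equalityI subsetI)
    fix g assume g: "g \<in> nonbounding m (smul {a} x)"
    then have "g \<in> carrier G" unfolding nonbounding_def by simp
    moreover have "g = a \<otimes> (inv a \<otimes> g)"
      using a \<open>g \<in> carrier G\<close> by (simp add: m_assoc[symmetric])
    ultimately show "g \<in> (\<lambda>h. a \<otimes> h) ` nonbounding m x"
      using g shift by blast
  next
    fix g assume "g \<in> (\<lambda>h. a \<otimes> h) ` nonbounding m x"
    then obtain h where h: "h \<in> nonbounding m x" and g: "g = a \<otimes> h" by blast
    then have "h \<in> carrier G" unfolding nonbounding_def by simp
    then show "g \<in> nonbounding m (smul {a} x)"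
      using shift h g a by (simp add: m_assoc[symmetric])
  qed
qed

lemma nonbounding_smul:
  assumes m: "m \<in> M" and A: "A \<subseteq> carrier G" and x: "x \<in> M"
  shows "nonbounding m (smul A x) = bg_mult G A (nonbounding m x)"
proof -
  have "finite A" using A finite_carrier finite_subset by blast
  then have "nonbounding m (smul A x) = (\<Union>a\<in>A. nonbounding m (smul {a} x))"
    unfolding nonbounding_def using smul_le_iff A x m smul_closed by auto
  also have "\<dots> = (\<Union>a\<in>A. (\<lambda>h. a \<otimes> h) ` nonbounding m x)"
    using A by (simp add: nonbounding_smul_singleton[OF m _ x] subset_iff)
  also have "\<dots> = bg_mult G A (nonbounding m x)"
    unfolding bg_mult_def by auto
  finally show ?thesis .
qed

lemma one_in_nonbounding_iff: "m \<in> M \<Longrightarrow> \<one> \<in> nonbounding m x \<longleftrightarrow> \<not> x \<preceq> m"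
  unfolding nonbounding_def using smul_one by simp

definition free_embedding :: "(nat \<Rightarrow> 'm) \<Rightarrow> nat \<Rightarrow> 'm \<Rightarrow> nat \<Rightarrow> 'g set"
  where "free_embedding e n x = (\<lambda>i. if i < n then nonbounding (e i) x else {})"

context
  fixes e :: "nat \<Rightarrow> 'm" and n :: nat
  assumes e_range: "e ` {..<n} = M"
begin

lemma free_embedding_hom:
  "bg_module_hom G (free_embedding e n) M add zero smul
     (free_embedding e n ` M) bg_free_add bg_free_zero (bg_free_smul G)"
proof -
  have e: "e i \<in> M" if "i < n" for i using e_range that by blast
  have "free_embedding e n (add x y) = bg_free_add (free_embedding e n x) (free_embedding e n y)"
    if "x \<in> M" "y \<in> M" for x y
    using that e nonbounding_add by (intro ext) (simp add: free_embedding_def bg_free_add_def)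
  moreover have "free_embedding e n zero = bg_free_zero"
    using e nonbounding_zero by (intro ext) (simp add: free_embedding_def bg_free_zero_def)
  moreover have "free_embedding e n (smul A x) = bg_free_smul G A (free_embedding e n x)"
    if "A \<subseteq> carrier G" "x \<in> M" for A x
    using that e nonbounding_smul
    by (intro ext) (simp add: free_embedding_def bg_free_smul_def bg_mult_def)
  ultimately show ?thesis
    unfolding bg_module_hom_def bg_elems_def by blast
qed

lemma inj_on_free_embedding: "inj_on (free_embedding e n) M"
proof (rule inj_onI)
  fix x y assume x: "x \<in> M" and y: "y \<in> M" and eq: "free_embedding e n x = free_embedding e n y"
  have same: "nonbounding m x = nonbounding m y" if "m \<in> M" for m
  proof -
    obtain i where "i < n" "m = e i" using \<open>m \<in> M\<close> e_range by blast
    then show ?thesis using fun_cong[OF eq, of i] by (simp add: free_embedding_def)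
  qed
  have "x \<preceq> y" using same[OF y] one_in_nonbounding_iff[OF y] le_refl[OF y] by blast
  moreover have "y \<preceq> x" using same[OF x] one_in_nonbounding_iff[OF x] le_refl[OF x] by blast
  ultimately show "x = y" using le_antisym x y by simp
qed

lemma free_embedding_image_submodule:
  "bg_submodule G (free_embedding e n ` M) (bg_free G n) bg_free_add bg_free_zero (bg_free_smul G)"
proof (rule hom_image_submodule[OF free_embedding_hom])
  show "free_embedding e n ` M \<subseteq> bg_free G n"
    unfolding free_embedding_def bg_free_def bg_elems_def nonbounding_def by auto
qed

end

end

theorem corollary4p9:
  fixes G :: "('g, 'b) monoid_scheme"
    and M :: "'m set" and add :: "'m \<Rightarrow> 'm \<Rightarrow> 'm" and zero :: 'm
    and smul :: "'g set \<Rightarrow> 'm \<Rightarrow> 'm"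
  assumes "group G" and "finite (carrier G)"
    and "bg_module G M add zero smul"
    and "bg_fin_gen G M add zero smul"
  shows "\<exists>n N f. bg_submodule G N (bg_free G n) bg_free_add bg_free_zero (bg_free_smul G)
            \<and> bij_betw f M N
            \<and> bg_module_hom G f M add zero smul N bg_free_add bg_free_zero (bg_free_smul G)"
proof -
  interpret finite_bg_semimodule G M add zero smul
    by (intro finite_bg_semimodule.intro bg_semimodule.intro bg_semimodule_axioms.intro
        finite_bg_semimodule_axioms.intro assms(1-3))
  have "finite M" using bg_fin_gen_imp_finite assms(4) .
  then obtain e where "bij_betw e {0..<card M} M" using ex_bij_betw_nat_finite by blast
  then have e_range: "e ` {..<card M} = M" by (simp add: bij_betw_def atLeast0LessThan)
  show ?thesis
    using free_embedding_image_submodule[OF e_range] inj_on_free_embedding[OF e_range]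
      free_embedding_hom[OF e_range]
    unfolding bij_betw_def by blast
qed

end
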